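(* Let $G$ be an essentially $4$-edge-connected bipartite cubic graph with bipartition $(X,Y)$. Let $x\in X$ and $y\in Y$. Then $G-(N_G[x]\cup N_G[y])$ has a perfect matching.
   Context: $N_G[v]=\{v\}\cup N_G(v)$ is the closed neighborhood. A 3-connected cubic graph is essentially 4-edge-connected if every edge cut consisting of three edges $\{e_1,e_2,e_3\}$ induces $K_{1,3}$, i.e., the three edges are the three edges incident to a single vertex. *)

theory Defs
  imports Main
begin

definition graph :: "'a set \<Rightarrow> 'a set set \<Rightarrow> bool" where
  "graph V E \<longleftrightarrow> finite V \<and> (\<forall>e\<in>E. \<exists>u v. u \<noteq> v \<and> u \<in> V \<and> v \<in> V \<and> e = {u, v})"

definition degree :: "'a set set \<Rightarrow> 'a \<Rightarrow> nat" where
  "degree E v = card {e\<in>E. v \<in> e}"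

definition cubic :: "'a set \<Rightarrow> 'a set set \<Rightarrow> bool" where
  "cubic V E \<longleftrightarrow> graph V E \<and> (\<forall>v\<in>V. degree E v = 3)"

definition nbhd :: "'a set set \<Rightarrow> 'a \<Rightarrow> 'a set" where
  "nbhd E v = {u. {u, v} \<in> E}"

definition closed_nbhd :: "'a set set \<Rightarrow> 'a \<Rightarrow> 'a set" where
  "closed_nbhd E v = insert v (nbhd E v)"

text \<open>Vertex deletion G - S: vertex set V - S, edges of E avoiding S.\<close>
definition del_edges :: "'a set set \<Rightarrow> 'a set \<Rightarrow> 'a set set" where
  "del_edges E S = {e\<in>E. e \<inter> S = {}}"

definition connected :: "'a set \<Rightarrow> 'a set set \<Rightarrow> bool" where
  "connected V E \<longleftrightarrow> (\<forall>u\<in>V. \<forall>v\<in>V. (\<lambda>a b. {a, b} \<in> E)\<^sup>*\<^sup>* u v)"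

definition k_connected :: "nat \<Rightarrow> 'a set \<Rightarrow> 'a set set \<Rightarrow> bool" where
  "k_connected k V E \<longleftrightarrow> card V > k \<and>
     (\<forall>S. S \<subseteq> V \<and> card S < k \<longrightarrow> connected (V - S) (del_edges E S))"

definition edge_cut :: "'a set set \<Rightarrow> 'a set \<Rightarrow> 'a set set" where
  "edge_cut E S = {e\<in>E. card (e \<inter> S) = 1}"

definition ess_4_edge_connected :: "'a set \<Rightarrow> 'a set set \<Rightarrow> bool" where
  "ess_4_edge_connected V E \<longleftrightarrow> cubic V E \<and> k_connected 3 V E \<and>
     (\<forall>S. S \<subseteq> V \<and> S \<noteq> {} \<and> S \<noteq> V \<and> card (edge_cut E S) = 3 \<longrightarrow>
        (\<exists>v\<in>V. edge_cut E S = {e\<in>E. v \<in> e}))"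

definition bipartition :: "'a set \<Rightarrow> 'a set set \<Rightarrow> 'a set \<Rightarrow> 'a set \<Rightarrow> bool" where
  "bipartition V E X Y \<longleftrightarrow> X \<union> Y = V \<and> X \<inter> Y = {} \<and>
     (\<forall>e\<in>E. card (e \<inter> X) = 1 \<and> card (e \<inter> Y) = 1)"

definition perfect_matching :: "'a set \<Rightarrow> 'a set set \<Rightarrow> 'a set set \<Rightarrow> bool" where
  "perfect_matching V E M \<longleftrightarrow> M \<subseteq> E \<and> (\<forall>v\<in>V. \<exists>!e. e \<in> M \<and> v \<in> e)"

definition has_perfect_matching :: "'a set \<Rightarrow> 'a set set \<Rightarrow> bool" where
  "has_perfect_matching V E \<longleftrightarrow> (\<exists>M. perfect_matching V E M)"

end

theory Submission
  imports Defs
begin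

(* Let R = N[x] \<union> N[y]. Since G - R is bipartite with sides X - R and Y - R, Hall's theorem
   applied to both sides yields a perfect matching once every A \<subseteq> X - R has at least |A|
   neighbours outside R (and symmetrically for Y). Otherwise let B = N(A) and S = {x} \<union> A \<union> B.
   The only vertices of R that B can meet are neighbours of x, and counting edge ends in this
   bipartite cubic graph shows that at most |B \<inter> N(x)| \<le> 3 edges leave S. But S contains a
   vertex of A with its three neighbours and V - S contains at least two neighbours of y, so
   essential 4-edge-connectivity forces at least four edges to leave S. *)

definition hall_condition :: "('a \<Rightarrow> 'b set) \<Rightarrow> 'a set \<Rightarrow> bool" where
  "hall_condition N A \<longleftrightarrow> (\<forall>B\<subseteq>A. card B \<le> card (\<Union>(N ` B)))"

lemma hall_condition_Diff_tight:
  assumes hall: "hall_condition N A" and fin: "finite A" "\<And>a. a \<in> A \<Longrightarrow> finite (N a)"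
    and B: "B \<subseteq> A" and tight: "card (\<Union>(N ` B)) = card B"
  shows "hall_condition (\<lambda>a. N a - \<Union>(N ` B)) (A - B)"
  unfolding hall_condition_def
proof (intro allI impI)
  fix C assume C: "C \<subseteq> A - B"
  have BC: "B \<union> C \<subseteq> A" using B C by blast
  then have "finite (B \<union> C)" using fin(1) by (rule finite_subset)
  then have finite: "finite B" "finite C" "finite (\<Union>(N ` (B \<union> C)))" using BC fin(2) by auto
  have "card B + card C = card (B \<union> C)"
    using C finite by (subst card_Un_disjoint) auto
  also have "\<dots> \<le> card (\<Union>(N ` (B \<union> C)))"
    using hall BC unfolding hall_condition_def by blast
  also have "\<Union>(N ` (B \<union> C)) = \<Union>(N ` B) \<union> (\<Union>a\<in>C. N a - \<Union>(N ` B))"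
    by blast
  also have "card \<dots> \<le> card B + card (\<Union>a\<in>C. N a - \<Union>(N ` B))"
    using card_Un_le tight by metis
  finally show "card C \<le> card (\<Union>a\<in>C. N a - \<Union>(N ` B))" by simp
qed

lemma hall_condition_Diff_singleton:
  assumes surplus: "\<And>C. C \<subseteq> A \<Longrightarrow> C \<noteq> {} \<Longrightarrow> card C < card (\<Union>(N ` C))"
  shows "hall_condition (\<lambda>a. N a - {b}) A"
  unfolding hall_condition_def
proof (intro allI impI)
  fix C assume C: "C \<subseteq> A"
  show "card C \<le> card (\<Union>a\<in>C. N a - {b})"
  proof (cases "C = {}")
    case False
    have "card C \<le> card (\<Union>(N ` C)) - card {b}" using surplus[OF C False] by simp
    also have "\<dots> \<le> card (\<Union>(N ` C) - {b})" by (rule diff_card_le_card_Diff) simp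
    also have "\<Union>(N ` C) - {b} = (\<Union>a\<in>C. N a - {b})" by blast
    finally show ?thesis .
  qed simp
qed

theorem hall_marriage:
  "finite A \<Longrightarrow> (\<And>a. a \<in> A \<Longrightarrow> finite (N a)) \<Longrightarrow> hall_condition N A
    \<Longrightarrow> \<exists>f. inj_on f A \<and> (\<forall>a\<in>A. f a \<in> N a)"
proof (induction A arbitrary: N rule: finite_psubset_induct)
  case (psubset A)
  have hall: "\<And>B. B \<subseteq> A \<Longrightarrow> card B \<le> card (\<Union>(N ` B))"
    using psubset.prems(2) unfolding hall_condition_def by blast
  \<comment> \<open>Halmos-Vaughan: split off a tight proper subset if there is one; otherwise every
      nonempty proper subset has surplus, so any single edge a-b can be used.\<close>
  consider "A = {}"
    | B where "B \<subset> A" "B \<noteq> {}" "card (\<Union>(N ` B)) = card B"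
    | a where "a \<in> A" "\<And>C. C \<subseteq> A - {a} \<Longrightarrow> C \<noteq> {} \<Longrightarrow> card C < card (\<Union>(N ` C))"
  proof (cases "\<exists>B. B \<subset> A \<and> B \<noteq> {} \<and> card (\<Union>(N ` B)) = card B")
    case no_tight: False
    show thesis
    proof (cases "A = {}")
      case False
      then obtain a where a: "a \<in> A" by blast
      have "card C < card (\<Union>(N ` C))" if C: "C \<subseteq> A - {a}" "C \<noteq> {}" for C
      proof -
        have "C \<subset> A" using C a by blast
        then have "card (\<Union>(N ` C)) \<noteq> card C" using no_tight C(2) by blast
        moreover have "card C \<le> card (\<Union>(N ` C))" using hall \<open>C \<subset> A\<close> by blast
        ultimately show ?thesis by linarith
      qed
      with a show thesis using that(3) by blast
    qed (use that(1) in blast)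
  qed (use that(2) in blast)
  then show ?case
  proof cases
    case 1
    then show ?thesis by simp
  next
    case (2 B)
    let ?U = "\<Union>(N ` B)"
    have "\<exists>f. inj_on f B \<and> (\<forall>a\<in>B. f a \<in> N a)"
      using psubset.hyps psubset.prems \<open>B \<subset> A\<close>
      by (intro psubset.IH[OF \<open>B \<subset> A\<close>]) (auto simp: hall_condition_def)
    then obtain f where f: "inj_on f B" "\<forall>a\<in>B. f a \<in> N a" by blast
    have "hall_condition (\<lambda>a. N a - ?U) (A - B)"
      using psubset.hyps psubset.prems \<open>B \<subset> A\<close> 2(3) by (intro hall_condition_Diff_tight) auto
    then have "\<exists>g. inj_on g (A - B) \<and> (\<forall>a\<in>A - B. g a \<in> N a - ?U)"
      using psubset.hyps psubset.prems \<open>B \<subset> A\<close> \<open>B \<noteq> {}\<close> by (intro psubset.IH) auto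
    then obtain g where g: "inj_on g (A - B)" "\<forall>a\<in>A - B. g a \<in> N a - ?U" by blast
    have "f ` B \<subseteq> ?U" using f(2) by blast
    moreover have "g ` (A - B) \<inter> ?U = {}" using g(2) by blast
    ultimately have "f ` B \<inter> g ` (A - B) = {}" by blast
    then have "inj_on (\<lambda>a. if a \<in> B then f a else g a) (B \<union> (A - B))"
      by (rule inj_on_disjoint_Un[OF f(1) g(1)])
    then have "inj_on (\<lambda>a. if a \<in> B then f a else g a) A"
      using \<open>B \<subset> A\<close> by (simp add: Un_absorb1 psubset_imp_subset)
    moreover have "\<forall>a\<in>A. (if a \<in> B then f a else g a) \<in> N a" using f(2) g(2) by simp
    ultimately show ?thesis by blast
  next
    case (3 a)
    have "card {a} \<le> card (N a)" using hall[of "{a}"] \<open>a \<in> A\<close> by simp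
    then obtain b where b: "b \<in> N a" by fastforce
    have "hall_condition (\<lambda>z. N z - {b}) (A - {a})"
      using 3(2) by (rule hall_condition_Diff_singleton)
    then have "\<exists>g. inj_on g (A - {a}) \<and> (\<forall>z\<in>A - {a}. g z \<in> N z - {b})"
      using psubset.hyps psubset.prems \<open>a \<in> A\<close> by (intro psubset.IH) auto
    then obtain g where g: "inj_on g (A - {a})" "\<forall>z\<in>A - {a}. g z \<in> N z - {b}" by blast
    have "inj_on (\<lambda>z. if z \<in> A - {a} then g z else b) (A - {a} \<union> {a})"
      using g by (intro inj_on_disjoint_Un) auto
    then have "inj_on (\<lambda>z. if z \<in> A - {a} then g z else b) A"
      using \<open>a \<in> A\<close> by (simp add: insert_absorb)
    moreover have "\<forall>z\<in>A. (if z \<in> A - {a} then g z else b) \<in> N z" using g(2) b by simp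
    ultimately show ?thesis by blast
  qed
qed

lemma graph_finite_edges:
  assumes "graph V E"
  shows "finite E"
proof -
  have "E \<subseteq> Pow V" using assms unfolding graph_def by auto
  moreover have "finite V" using assms unfolding graph_def by simp
  ultimately show ?thesis by (simp add: finite_subset)
qed

lemma doubleton_in_edge_cut_iff:
  assumes "p \<noteq> q"
  shows "{p, q} \<in> edge_cut E S \<longleftrightarrow> {p, q} \<in> E \<and> (p \<in> S \<longleftrightarrow> q \<notin> S)"
  using assms by (cases "p \<in> S"; cases "q \<in> S") (auto simp: edge_cut_def Int_insert_left)

lemma edge_cut_Diff:
  assumes "graph V E"
  shows "edge_cut E (V - S) = edge_cut E S"
proof -
  have "e \<in> edge_cut E (V - S) \<longleftrightarrow> e \<in> edge_cut E S" if "e \<in> E" for e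
  proof -
    obtain p q where "p \<noteq> q" "p \<in> V" "q \<in> V" "e = {p, q}"
      using assms \<open>e \<in> E\<close> unfolding graph_def by auto
    then show ?thesis by (auto simp: doubleton_in_edge_cut_iff)
  qed
  then show ?thesis by (auto simp: edge_cut_def)
qed

lemma edge_cut_Diff_center:
  assumes "graph V E" and star: "edge_cut E S = {e\<in>E. v \<in> e}" and "v \<in> S"
  shows "edge_cut E (S - {v}) = {}"
proof -
  have "e \<notin> edge_cut E (S - {v})" if "e \<in> E" for e
  proof -
    obtain p q where pq: "p \<noteq> q" "e = {p, q}"
      using assms \<open>e \<in> E\<close> unfolding graph_def by auto
    have "(p \<in> S \<longleftrightarrow> q \<notin> S) \<longleftrightarrow> v = p \<or> v = q"
      using star \<open>e \<in> E\<close> doubleton_in_edge_cut_iff[OF pq(1), of E S] pq(2) by auto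
    then show ?thesis using pq \<open>v \<in> S\<close> by (auto simp: doubleton_in_edge_cut_iff)
  qed
  then show ?thesis by (auto simp: edge_cut_def)
qed

lemma k_connected_3_edge_cut:
  assumes "graph V E" and "k_connected 3 V E" and "S \<subseteq> V" and "V - S \<noteq> {}"
  shows "min 3 (card S) \<le> card (edge_cut E S)"
proof (rule ccontr)
  assume small: "\<not> min 3 (card S) \<le> card (edge_cut E S)"
  \<comment> \<open>the ends in S of the cut edges: fewer than three vertices whose deletion would leave
      no path from S - W to V - S\<close>
  define W where "W = (\<lambda>e. the_elem (e \<inter> S)) ` edge_cut E S"
  have "finite (edge_cut E S)"
    using graph_finite_edges[OF assms(1)] by (simp add: edge_cut_def)
  then have "finite W" and "card W \<le> card (edge_cut E S)"
    unfolding W_def by (simp, rule card_image_le)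
  with small have card_W: "card W < 3" "card W < card S" by auto
  have WS: "W \<subseteq> S"
  proof
    fix w assume "w \<in> W"
    then obtain e where e: "card (e \<inter> S) = 1" "w = the_elem (e \<inter> S)"
      unfolding W_def edge_cut_def by auto
    from e(1) obtain z where "e \<inter> S = {z}" by (rule card_1_singletonE)
    with e(2) show "w \<in> S" by auto
  qed
  have "\<not> S \<subseteq> W" using card_mono[OF \<open>finite W\<close>] card_W(2) by (meson leD)
  then obtain u where u: "u \<in> S" "u \<notin> W" by auto
  obtain v where v: "v \<in> V" "v \<notin> S" using assms(4) by auto
  have "W \<subseteq> V" using WS assms(3) by (rule order_trans)
  then have "connected (V - W) (del_edges E W)"
    using assms(2) card_W(1) unfolding k_connected_def by auto
  then have path: "(\<lambda>a b. {a, b} \<in> del_edges E W)\<^sup>*\<^sup>* u v"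
    using u v WS assms(3) unfolding connected_def by auto
  have "w \<in> S" if "(\<lambda>a b. {a, b} \<in> del_edges E W)\<^sup>*\<^sup>* u w" for w
    using that
  proof (induction rule: rtranclp_induct)
    case (step a b)
    show ?case
    proof (rule ccontr)
      assume "b \<notin> S"
      have ab: "{a, b} \<in> E" "{a, b} \<inter> W = {}" using step.hyps(2) unfolding del_edges_def by auto
      have "{a, b} \<inter> S = {a}" using step.IH \<open>b \<notin> S\<close> by auto
      then have "{a, b} \<in> edge_cut E S" and "a = the_elem ({a, b} \<inter> S)"
        using ab(1) unfolding edge_cut_def by simp_all
      then have "a \<in> W" unfolding W_def by (rule rev_image_eqI)
      then show False using ab(2) by auto
    qed
  qed (use u in simp)
  then show False using path v by auto
qed

lemma ess_4_edge_connected_edge_cut: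
  assumes ess: "ess_4_edge_connected V E"
    and S: "S \<subseteq> V" "3 \<le> card S" "2 \<le> card (V - S)"
  shows "4 \<le> card (edge_cut E S)"
proof -
  have graph: "graph V E" and kc: "k_connected 3 V E"
    using ess unfolding ess_4_edge_connected_def cubic_def by auto
  have "finite V" using graph unfolding graph_def by simp
  have nonempty_cut: "edge_cut E T \<noteq> {}" if T: "T \<subseteq> V" "T \<noteq> {}" "V - T \<noteq> {}" for T
  proof
    assume "edge_cut E T = {}"
    with k_connected_3_edge_cut[OF graph kc T(1,3)] have "card T = 0" by simp
    with T(1,2) \<open>finite V\<close> show False by (simp add: finite_subset)
  qed
  have "V - S \<noteq> {}" "S \<noteq> {}" using S(2,3) by fastforce+
  then have "3 \<le> card (edge_cut E S)"
    using k_connected_3_edge_cut[OF graph kc S(1)] S(2) by simp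
  moreover have "card (edge_cut E S) \<noteq> 3"
  proof
    assume "card (edge_cut E S) = 3"
    moreover have "S \<noteq> V" using \<open>V - S \<noteq> {}\<close> by auto
    ultimately obtain v where v: "v \<in> V" "edge_cut E S = {e\<in>E. v \<in> e}"
      using ess S(1) \<open>S \<noteq> {}\<close> unfolding ess_4_edge_connected_def by blast
    show False
    proof (cases "v \<in> S")
      case True
      have "card (S - {v}) \<noteq> 0" using S(2) True by (simp add: card_Diff_singleton_if)
      then have "S - {v} \<noteq> {}" by (metis card.empty)
      moreover have "edge_cut E (S - {v}) = {}" by (rule edge_cut_Diff_center[OF graph v(2) True])
      ultimately show False using nonempty_cut[of "S - {v}"] S(1) \<open>V - S \<noteq> {}\<close> by auto
    next
      case False
      then have "v \<in> V - S" using v(1) by simp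
      have star: "edge_cut E (V - S) = {e\<in>E. v \<in> e}" using edge_cut_Diff[OF graph] v(2) by simp
      have "card (V - S - {v}) \<noteq> 0"
        using S(3) \<open>v \<in> V - S\<close> by (simp add: card_Diff_singleton_if)
      then have "V - S - {v} \<noteq> {}" by (metis card.empty)
      moreover have "edge_cut E (V - S - {v}) = {}"
        using star \<open>v \<in> V - S\<close> by (rule edge_cut_Diff_center[OF graph])
      ultimately show False using nonempty_cut[of "V - S - {v}"] \<open>S \<noteq> {}\<close> S(1) by auto
    qed
  qed
  ultimately show ?thesis by linarith
qed

lemma edges_containing_eq_image_nbhd:
  assumes "graph V E"
  shows "{e\<in>E. v \<in> e} = (\<lambda>u. {v, u}) ` nbhd E v"
proof
  show "{e\<in>E. v \<in> e} \<subseteq> (\<lambda>u. {v, u}) ` nbhd E v"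
  proof
    fix e assume e: "e \<in> {e\<in>E. v \<in> e}"
    then obtain a b where "e = {a, b}" "a \<noteq> b" using assms unfolding graph_def by auto
    with e have "e = {v, if v = a then b else a}" "{v, if v = a then b else a} \<in> E"
      by (auto simp: insert_commute)
    then show "e \<in> (\<lambda>u. {v, u}) ` nbhd E v" unfolding nbhd_def by (auto simp: insert_commute)
  qed
qed (auto simp: nbhd_def insert_commute)

lemma card_nbhd_eq_degree:
  assumes "graph V E"
  shows "card (nbhd E v) = degree E v"
proof -
  have "inj_on (\<lambda>u. {v, u}) (nbhd E v)" by (auto simp: inj_on_def doubleton_eq_iff)
  then show ?thesis
    unfolding degree_def edges_containing_eq_image_nbhd[OF assms] by (simp add: card_image)
qed

definition incident_edges :: "'a set set \<Rightarrow> 'a set \<Rightarrow> 'a set set" where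
  "incident_edges E Z = {e\<in>E. e \<inter> Z \<noteq> {}}"

lemma card_incident_edges_independent:
  assumes "cubic V E" and "Z \<subseteq> V" and independent: "\<And>e. e \<in> E \<Longrightarrow> card (e \<inter> Z) \<le> 1"
  shows "card (incident_edges E Z) = 3 * card Z"
proof -
  have graph: "graph V E" using assms(1) unfolding cubic_def by simp
  have "finite Z" using assms(2) graph unfolding graph_def by (auto intro: finite_subset)
  have "incident_edges E Z = (\<Union>z\<in>Z. {e\<in>E. z \<in> e})" unfolding incident_edges_def by auto
  also have "card \<dots> = (\<Sum>z\<in>Z. card {e\<in>E. z \<in> e})"
  proof (rule card_UN_disjoint[OF \<open>finite Z\<close>])
    show "\<forall>z\<in>Z. finite {e\<in>E. z \<in> e}" using graph_finite_edges[OF graph] by simp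
    show "\<forall>z\<in>Z. \<forall>z'\<in>Z. z \<noteq> z' \<longrightarrow> {e\<in>E. z \<in> e} \<inter> {e\<in>E. z' \<in> e} = {}"
    proof (intro ballI impI)
      fix z z' assume zz': "z \<in> Z" "z' \<in> Z" "z \<noteq> z'"
      have "\<not> card (e \<inter> Z) \<le> 1" if "z \<in> e" "z' \<in> e" for e
      proof -
        have "{z, z'} \<subseteq> e \<inter> Z" using that zz' by auto
        then have "card {z, z'} \<le> card (e \<inter> Z)" using \<open>finite Z\<close> by (simp add: card_mono)
        then show ?thesis using zz'(3) by simp
      qed
      then show "{e\<in>E. z \<in> e} \<inter> {e\<in>E. z' \<in> e} = {}" using independent by auto
    qed
  qed
  also have "\<dots> = (\<Sum>z\<in>Z. 3)"
    using assms(1,2) unfolding cubic_def degree_def by (intro sum.cong) auto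
  finally show ?thesis by simp
qed

lemma perfect_matching_of_bij_betw:
  assumes bij: "bij_betw f U W" and disjoint: "U \<inter> W = {}"
    and edges: "\<And>a. a \<in> U \<Longrightarrow> {a, f a} \<in> F"
  shows "perfect_matching (U \<union> W) F ((\<lambda>a. {a, f a}) ` U)"
  unfolding perfect_matching_def
proof (intro conjI ballI)
  show "(\<lambda>a. {a, f a}) ` U \<subseteq> F" using edges by auto
next
  fix v assume "v \<in> U \<union> W"
  then obtain a where a: "a \<in> U" "v = a \<or> v = f a"
    using bij unfolding bij_betw_def by auto
  show "\<exists>!e. e \<in> (\<lambda>a. {a, f a}) ` U \<and> v \<in> e"
  proof (rule ex1I[of _ "{a, f a}"])
    show "{a, f a} \<in> (\<lambda>a. {a, f a}) ` U \<and> v \<in> {a, f a}" using a by auto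
    fix e assume "e \<in> (\<lambda>a. {a, f a}) ` U \<and> v \<in> e"
    then obtain b where b: "b \<in> U" "e = {b, f b}" "v = b \<or> v = f b" by auto
    have "f a \<in> W" "f b \<in> W" using a(1) b(1) bij unfolding bij_betw_def by auto
    then have "a = b"
      using a b disjoint bij unfolding bij_betw_def by (auto dest: inj_onD)
    then show "e = {a, f a}" using b(2) by simp
  qed
qed

locale cubic_bipartite =
  fixes V :: "'a set" and E :: "'a set set" and X Y :: "'a set"
  assumes cubic: "cubic V E" and bipartition: "bipartition V E X Y"
begin

lemma graph: "graph V E"
  using cubic unfolding cubic_def by simp

lemma sides: "X \<union> Y = V" "X \<inter> Y = {}"
  using bipartition unfolding bipartition_def by simp_all

lemma finite_vertices: "finite V"
  using graph unfolding graph_def by simp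

lemma swap_sides: "cubic_bipartite V E Y X"
  using cubic bipartition unfolding cubic_bipartite_def bipartition_def by auto

lemma edge_between_sides:
  assumes "e \<in> E"
  obtains p q where "p \<in> X" "q \<in> Y" "e = {p, q}"
proof -
  obtain u v where uv: "u \<noteq> v" "u \<in> V" "v \<in> V" "e = {u, v}"
    using graph assms unfolding graph_def by auto
  have "card (e \<inter> X) = 1" "card (e \<inter> Y) = 1"
    using bipartition assms unfolding bipartition_def by auto
  then have "u \<in> X \<longleftrightarrow> v \<notin> X"
    using uv sides by (cases "u \<in> X"; cases "v \<in> X") (auto simp: Int_insert_left)
  then show thesis using that uv sides by (cases "u \<in> X") (auto simp: insert_commute)
qed

lemma nbhd_subset_sides:
  shows "v \<in> X \<Longrightarrow> nbhd E v \<subseteq> Y" and "v \<in> Y \<Longrightarrow> nbhd E v \<subseteq> X"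
proof -
  have "u \<in> X \<and> v \<in> Y \<or> u \<in> Y \<and> v \<in> X" if "u \<in> nbhd E v" for u
  proof -
    obtain p q where "p \<in> X" "q \<in> Y" "{u, v} = {p, q}"
      using \<open>u \<in> nbhd E v\<close> edge_between_sides unfolding nbhd_def by auto
    then show ?thesis by (auto simp: doubleton_eq_iff)
  qed
  then show "v \<in> X \<Longrightarrow> nbhd E v \<subseteq> Y" and "v \<in> Y \<Longrightarrow> nbhd E v \<subseteq> X"
    using sides(2) by auto
qed

lemma card_nbhd: "v \<in> V \<Longrightarrow> card (nbhd E v) = 3"
  using cubic card_nbhd_eq_degree[OF graph] unfolding cubic_def by simp

lemma finite_nbhd: "v \<in> V \<Longrightarrow> finite (nbhd E v)"
  using card_nbhd by (simp add: card_ge_0_finite)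

lemma card_incident_edges:
  assumes "Z \<subseteq> X \<or> Z \<subseteq> Y"
  shows "card (incident_edges E Z) = 3 * card Z"
proof (rule card_incident_edges_independent[OF cubic])
  show "Z \<subseteq> V" using assms sides by auto
  fix e assume "e \<in> E"
  then have "card (e \<inter> X) = 1" "card (e \<inter> Y) = 1"
    using bipartition unfolding bipartition_def by auto
  moreover have "finite e" using \<open>e \<in> E\<close> by (auto elim: edge_between_sides)
  ultimately show "card (e \<inter> Z) \<le> 1"
    using assms card_mono[of "e \<inter> X" "e \<inter> Z"] card_mono[of "e \<inter> Y" "e \<inter> Z"] by auto
qed

lemma card_edge_cut_Un_sides:
  assumes P: "P \<subseteq> X" and Q: "Q \<subseteq> Y"
  shows "card (edge_cut E (P \<union> Q)) + 2 * card (incident_edges E P \<inter> incident_edges E Q)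
    = 3 * card P + 3 * card Q"
proof -
  let ?IP = "incident_edges E P" and ?IQ = "incident_edges E Q"
  have cut: "edge_cut E (P \<union> Q) = (?IP - ?IQ) \<union> (?IQ - ?IP)"
  proof -
    have "e \<in> edge_cut E (P \<union> Q) \<longleftrightarrow> e \<in> (?IP - ?IQ) \<union> (?IQ - ?IP)" if "e \<in> E" for e
    proof -
      obtain p q where pq: "p \<in> X" "q \<in> Y" "e = {p, q}"
        using \<open>e \<in> E\<close> by (rule edge_between_sides)
      then have "p \<noteq> q" using sides(2) by auto
      then show ?thesis
        using pq P Q sides(2) \<open>e \<in> E\<close>
        by (auto simp: doubleton_in_edge_cut_iff incident_edges_def)
    qed
    then show ?thesis by (auto simp: edge_cut_def incident_edges_def)
  qed
  have "finite E" using graph by (rule graph_finite_edges)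
  then have "finite ?IP" "finite ?IQ" by (simp_all add: incident_edges_def)
  then have "card (edge_cut E (P \<union> Q)) = card (?IP - ?IQ) + card (?IQ - ?IP)"
    unfolding cut by (subst card_Un_disjoint) auto
  also have "\<dots> = card ?IP + card ?IQ - 2 * card (?IP \<inter> ?IQ)"
    using \<open>finite ?IP\<close> \<open>finite ?IQ\<close> card_mono[of ?IP "?IP \<inter> ?IQ"] card_mono[of ?IQ "?IP \<inter> ?IQ"]
    by (simp add: card_Diff_subset_Int Int_commute)
  finally show ?thesis
    using P Q card_incident_edges card_mono[OF \<open>finite ?IP\<close>, of "?IP \<inter> ?IQ"]
      card_mono[OF \<open>finite ?IQ\<close>, of "?IP \<inter> ?IQ"] by auto
qed

lemma card_edge_cut_insert_Un_nbhds:
  assumes x: "x \<in> X" and A: "A \<subseteq> X" "x \<notin> A" and B: "B \<subseteq> Y"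
    and nbhds: "\<And>a. a \<in> A \<Longrightarrow> nbhd E a \<subseteq> B"
  shows "card (edge_cut E (insert x A \<union> B)) + 3 * card A + 2 * card (B \<inter> nbhd E x)
    \<le> 3 + 3 * card B"
proof -
  let ?I = "incident_edges E"
  define xT where "xT = (\<lambda>u. {x, u}) ` (B \<inter> nbhd E x)"
  have "finite A" "finite B" using A(1) B sides(1) finite_vertices by (auto intro: finite_subset)
  have "finite E" using graph by (rule graph_finite_edges)
  have IA: "?I A \<subseteq> ?I (insert x A) \<inter> ?I B"
  proof
    fix e assume "e \<in> ?I A"
    then obtain a where e: "e \<in> E" "a \<in> e" "a \<in> A" unfolding incident_edges_def by auto
    obtain p q where pq: "p \<in> X" "q \<in> Y" "e = {p, q}" using \<open>e \<in> E\<close> by (rule edge_between_sides)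
    have "a = p" using e(2,3) pq A(1) sides(2) by auto
    then have "q \<in> B" using nbhds[OF e(3)] e(1) pq(3) unfolding nbhd_def by (auto simp: insert_commute)
    then show "e \<in> ?I (insert x A) \<inter> ?I B" using e pq(3) unfolding incident_edges_def by auto
  qed
  have "xT \<subseteq> ?I (insert x A) \<inter> ?I B"
    unfolding xT_def incident_edges_def nbhd_def by (auto simp: insert_commute)
  moreover have "?I A \<inter> xT = {}"
    using A B x sides(2) unfolding xT_def incident_edges_def by auto
  moreover have "card xT = card (B \<inter> nbhd E x)"
    unfolding xT_def by (rule card_image) (auto simp: inj_on_def doubleton_eq_iff)
  moreover have "card (?I A) = 3 * card A" using A(1) by (simp add: card_incident_edges)
  moreover have "finite (?I (insert x A) \<inter> ?I B)"
    using \<open>finite E\<close> unfolding incident_edges_def by simp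
  ultimately have "3 * card A + card (B \<inter> nbhd E x) \<le> card (?I (insert x A) \<inter> ?I B)"
    using IA card_mono[of "?I (insert x A) \<inter> ?I B" "?I A \<union> xT"]
    by (metis card_Un_disjoint infinite_super le_sup_iff)
  moreover have "card (insert x A) = card A + 1" using \<open>finite A\<close> A(2) by simp
  ultimately show ?thesis
    using card_edge_cut_Un_sides[of "insert x A" B] x A(1) B by simp
qed

lemma card_edge_cut_deficient_le:
  assumes x: "x \<in> X" and y: "y \<in> Y"
    and R: "R = closed_nbhd E x \<union> closed_nbhd E y"
    and A: "A \<subseteq> X - R" and deficient: "card (\<Union>a\<in>A. nbhd E a - R) < card A"
  shows "card (edge_cut E (insert x A \<union> \<Union>(nbhd E ` A))) \<le> 3"
proof -
  define B where "B = \<Union>(nbhd E ` A)"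
  have "B \<subseteq> Y" unfolding B_def using A nbhd_subset_sides(1) by auto
  then have "finite B" using finite_vertices sides(1) by (auto intro: finite_subset)
  have "x \<notin> A" using A unfolding R closed_nbhd_def by auto
  have "B \<inter> R \<subseteq> B \<inter> nbhd E x"
  proof
    fix b assume b: "b \<in> B \<inter> R"
    then obtain a where a: "a \<in> A" "b \<in> nbhd E a" unfolding B_def by auto
    have "b \<noteq> y"
    proof
      assume "b = y"
      then have "a \<in> R" using a(2) unfolding R closed_nbhd_def nbhd_def by (auto simp: insert_commute)
      then show False using a(1) A by auto
    qed
    moreover have "b \<notin> insert y (nbhd E y)" "b \<noteq> x"
      using b \<open>B \<subseteq> Y\<close> x sides(2) nbhd_subset_sides(2)[OF y] \<open>b \<noteq> y\<close> by auto
    ultimately show "b \<in> B \<inter> nbhd E x" using b unfolding R closed_nbhd_def by auto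
  qed
  \<comment> \<open>|B| \<le> |B - R| + |B \<inter> N(x)| < |A| + |B \<inter> N(x)|, so the count bounds the cut by |B \<inter> N(x)|\<close>
  then have "card B \<le> card (B - R) + card (B \<inter> nbhd E x)"
    using \<open>finite B\<close> card_Un_le[of "B - R" "B \<inter> R"] card_mono[of "B \<inter> nbhd E x" "B \<inter> R"]
    by (simp add: Un_Diff_Int)
  moreover have "card (B - R) < card A"
  proof -
    have "(\<Union>a\<in>A. nbhd E a - R) = B - R" unfolding B_def by auto
    with deficient show ?thesis by simp
  qed
  moreover have "card (B \<inter> nbhd E x) \<le> 3"
    using card_mono[of "nbhd E x" "B \<inter> nbhd E x"] card_nbhd[of x] finite_nbhd[of x] x sides(1)
    by auto
  moreover have "card (edge_cut E (insert x A \<union> B)) + 3 * card A + 2 * card (B \<inter> nbhd E x)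
      \<le> 3 + 3 * card B"
    using x A \<open>x \<notin> A\<close> \<open>B \<subseteq> Y\<close> unfolding B_def by (intro card_edge_cut_insert_Un_nbhds) auto
  ultimately show ?thesis unfolding B_def by linarith
qed

lemma hall_condition_outside_closed_nbhds:
  assumes ess: "ess_4_edge_connected V E" and x: "x \<in> X" and y: "y \<in> Y"
    and R: "R = closed_nbhd E x \<union> closed_nbhd E y"
  shows "hall_condition (\<lambda>a. nbhd E a - R) (X - R)"
  unfolding hall_condition_def
proof (intro allI impI)
  fix A assume A: "A \<subseteq> X - R"
  define S where "S = insert x A \<union> \<Union>(nbhd E ` A)"
  show "card A \<le> card (\<Union>a\<in>A. nbhd E a - R)"
  proof (rule ccontr)
    assume deficient: "\<not> card A \<le> card (\<Union>a\<in>A. nbhd E a - R)"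
    then have cut: "card (edge_cut E S) \<le> 3"
      unfolding S_def using card_edge_cut_deficient_le[OF x y R A] by simp
    obtain a where "a \<in> A" using deficient by fastforce
    have SV: "S \<subseteq> V"
      unfolding S_def using A x nbhd_subset_sides(1) sides(1) by blast
    have "finite S" using SV finite_vertices by (rule finite_subset)
    moreover have "nbhd E a \<subseteq> S" using \<open>a \<in> A\<close> unfolding S_def by auto
    ultimately have "card (nbhd E a) \<le> card S" by (rule card_mono)
    moreover have "a \<in> V" using \<open>a \<in> A\<close> A sides(1) by auto
    ultimately have "3 \<le> card S" using card_nbhd by simp
    have "nbhd E y - {x} \<subseteq> V - S"
    proof
      fix u assume u: "u \<in> nbhd E y - {x}"
      then have "u \<in> X" using nbhd_subset_sides(2)[OF y] by auto
      moreover have "u \<in> R" using u unfolding R closed_nbhd_def by auto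
      ultimately show "u \<in> V - S"
        using u A sides nbhd_subset_sides(1) unfolding S_def by auto
    qed
    moreover have "card (nbhd E y - {x}) \<ge> 2"
      using card_nbhd[of y] y sides(1) by (auto simp: card_Diff_singleton_if)
    ultimately have "2 \<le> card (V - S)"
      using card_mono[of "V - S" "nbhd E y - {x}"] finite_vertices by auto
    then show False
      using ess_4_edge_connected_edge_cut[OF ess SV \<open>3 \<le> card S\<close>] cut by simp
  qed
qed

end

theorem lemma2p12:
  fixes V :: "'a set" and E :: "'a set set" and X Y :: "'a set" and x y :: 'a
  assumes "cubic V E"
    and "ess_4_edge_connected V E"
    and "bipartition V E X Y"
    and "x \<in> X" and "y \<in> Y"
  shows "has_perfect_matching (V - (closed_nbhd E x \<union> closed_nbhd E y))
           (del_edges E (closed_nbhd E x \<union> closed_nbhd E y))"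
proof -
  interpret cubic_bipartite V E X Y using assms(1,3) by unfold_locales
  define R where "R = closed_nbhd E x \<union> closed_nbhd E y"
  have finite: "finite (X - R)" "finite (Y - R)" "\<And>a. a \<in> V \<Longrightarrow> finite (nbhd E a - R)"
    using finite_vertices sides(1) finite_nbhd by auto
  obtain f where f: "inj_on f (X - R)" "\<forall>a\<in>X - R. f a \<in> nbhd E a - R"
    using hall_marriage[OF finite(1) _ hall_condition_outside_closed_nbhds[OF assms(2,4,5) R_def]]
      finite(3) sides(1) by blast
  obtain g where g: "inj_on g (Y - R)" "\<forall>a\<in>Y - R. g a \<in> nbhd E a - R"
    using hall_marriage[OF finite(2) _ cubic_bipartite.hall_condition_outside_closed_nbhds[OF swap_sides
      assms(2,5,4)]] finite(3) sides(1) R_def by (auto simp: Un_commute)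
  have "f ` (X - R) \<subseteq> Y - R" using f(2) nbhd_subset_sides(1) by blast
  moreover have "g ` (Y - R) \<subseteq> X - R" using g(2) nbhd_subset_sides(2) by blast
  ultimately have "f ` (X - R) = Y - R" using f(1) g(1) finite
    by (metis card_bij_eq card_image card_subset_eq)
  then have "bij_betw f (X - R) (Y - R)" using f(1) by (simp add: bij_betw_def)
  moreover have "{a, f a} \<in> del_edges E R" if "a \<in> X - R" for a
    using f(2) that unfolding del_edges_def nbhd_def by (auto simp: insert_commute)
  ultimately have "perfect_matching ((X - R) \<union> (Y - R)) (del_edges E R) ((\<lambda>a. {a, f a}) ` (X - R))"
    using sides(2) by (intro perfect_matching_of_bij_betw) auto
  moreover have "(X - R) \<union> (Y - R) = V - R" using sides(1) by auto
  ultimately show ?thesis unfolding has_perfect_matching_def R_def by auto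
qed

end
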